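(* Let $n\ge 2$, let $T=\{1,\dots,n\}$ and let $\mathcal T$ be a topology on $T$. Fix an integer $k\ge 1$. Let $A,R,B,S\subseteq T\setminus\{n\}$ with $A\cap R=\emptyset$, $B\cap S=\emptyset$, where every point of $A$ and of $B$ is old (at stage $k$), every point of $R$ and of $S$ is new (at stage $k$), and $R\neq S$. Suppose $A\cup R$, $A\cup R\cup\{n\}$, $B\cup S$ and $B\cup S\cup\{n\}$ are all new $k$-systems of $\mathcal T$. Then $A$, $A\cup\{n\}$, $B$ and $B\cup\{n\}$ are all open in $\mathcal T$.
   Context: For $\alpha\in T$, $\alpha^{*}$ (the covering set of $\alpha$) denotes the smallest open set of $\mathcal T$ containing $\alpha$. For an integer $m\ge 0$, an $m$-system is an open set $P$ of $\mathcal T$ such that $P\setminus\{n\}$ has exactly $m$ points; it is upper if $n\notin P$ and lower if $n\in P$. For fixed $k$, a point $\alpha\neq n$ is called old if $\alpha^{*}$ is an $m$-system for some $m<k$, and new if $\alpha^{*}$ is a $k$-system. A $k$-system is called new if it contains at least one point $p\neq n$ that is not contained in any $m$-system with $m\le k-1$. *)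

theory Defs
  imports "HOL-Analysis.Analysis"
begin

text \<open>Topologies on T = {1..n} are values X :: nat topology with topspace X = {1..n}.
  The distinguished point is n.\<close>

definition covering_set :: "nat topology \<Rightarrow> nat \<Rightarrow> nat set" where
  "covering_set X a = \<Inter>{U. openin X U \<and> a \<in> U}"

definition m_system :: "nat topology \<Rightarrow> nat \<Rightarrow> nat \<Rightarrow> nat set \<Rightarrow> bool" where
  "m_system X n m P \<longleftrightarrow> openin X P \<and> card (P - {n}) = m"

definition old_point :: "nat topology \<Rightarrow> nat \<Rightarrow> nat \<Rightarrow> nat \<Rightarrow> bool" where
  "old_point X n k a \<longleftrightarrow> a \<noteq> n \<and> (\<exists>m<k. m_system X n m (covering_set X a))"

definition new_point :: "nat topology \<Rightarrow> nat \<Rightarrow> nat \<Rightarrow> nat \<Rightarrow> bool" where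
  "new_point X n k a \<longleftrightarrow> a \<noteq> n \<and> m_system X n k (covering_set X a)"

definition new_k_system :: "nat topology \<Rightarrow> nat \<Rightarrow> nat \<Rightarrow> nat set \<Rightarrow> bool" where
  "new_k_system X n k P \<longleftrightarrow> m_system X n k P \<and>
     (\<exists>p\<in>P. p \<noteq> n \<and> \<not> (\<exists>m Q. m \<le> k - 1 \<and> m_system X n m Q \<and> p \<in> Q))"

end

theory Submission
  imports Defs
begin

text \<open>In a finite topology the covering set of a point is open, so an open set is the union
  of the covering sets of its points, and covering sets shrink along membership. An old point's
  covering set has fewer than k points besides n, so it cannot contain a new point (whose own,
  smaller, covering set already has k of them); hence the open set A \<union> R loses nothing when R
  is removed. For A \<union> {n} it remains to see that the covering set of n misses R: if it
  contained r \<in> R, the covering set of r, which has k points besides n, would fill both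
  A \<union> R and B \<union> S, forcing A \<union> R = B \<union> S and, by separating old from new
  points, R = S.\<close>

lemma covering_set_subset: "openin X U \<Longrightarrow> a \<in> U \<Longrightarrow> covering_set X a \<subseteq> U"
  unfolding covering_set_def by auto

lemma in_covering_set: "a \<in> topspace X \<Longrightarrow> a \<in> covering_set X a"
  unfolding covering_set_def by auto

lemma openin_covering_set:
  assumes "finite (topspace X)" "a \<in> topspace X"
  shows "openin X (covering_set X a)"
proof -
  have "finite {U. openin X U \<and> a \<in> U}"
    by (rule finite_subset[of _ "Pow (topspace X)"]) (auto dest: openin_subset simp: assms)
  moreover have "{U. openin X U \<and> a \<in> U} \<noteq> {}"
    using assms by auto
  ultimately show ?thesis
    unfolding covering_set_def by (intro openin_Inter) auto
qed

lemma covering_set_mono: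
  assumes "finite (topspace X)" "a \<in> topspace X" "b \<in> covering_set X a"
  shows "covering_set X b \<subseteq> covering_set X a"
  using covering_set_subset[OF openin_covering_set[OF assms(1,2)] assms(3)] .

lemma openin_if_covering_sets_subset:
  assumes "finite (topspace X)" "U \<subseteq> topspace X" "\<And>a. a \<in> U \<Longrightarrow> covering_set X a \<subseteq> U"
  shows "openin X U"
proof -
  have "U = (\<Union>a\<in>U. covering_set X a)"
    using assms(2,3) in_covering_set by blast
  moreover have "openin X (\<Union>a\<in>U. covering_set X a)"
    using assms(1,2) openin_covering_set by (intro openin_Union) auto
  ultimately show ?thesis
    by simp
qed

lemma old_point_not_new_point: "old_point X n k a \<Longrightarrow> \<not> new_point X n k a"
  unfolding old_point_def new_point_def m_system_def by auto

lemma new_point_notin_covering_set_old_point: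
  assumes "finite (topspace X)" "a \<in> topspace X"
    and "old_point X n k a" "new_point X n k r"
  shows "r \<notin> covering_set X a"
proof
  assume r: "r \<in> covering_set X a"
  have "finite (covering_set X a)"
    using openin_subset[OF openin_covering_set[OF assms(1,2)]] assms(1) finite_subset by blast
  then have "card (covering_set X r - {n}) \<le> card (covering_set X a - {n})"
    using covering_set_mono[OF assms(1,2) r] by (intro card_mono) auto
  with assms(3,4) show False
    unfolding old_point_def new_point_def m_system_def by auto
qed

lemma openin_old_part:
  assumes "finite (topspace X)" "openin X (A \<union> R)"
    and "\<forall>a\<in>A. old_point X n k a" "\<forall>r\<in>R. new_point X n k r"
  shows "openin X A"
proof (rule openin_if_covering_sets_subset[OF assms(1)])
  show "A \<subseteq> topspace X"
    using openin_subset[OF assms(2)] by blast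
  fix a assume a: "a \<in> A"
  then have "a \<in> topspace X"
    using openin_subset[OF assms(2)] by blast
  then have "covering_set X a \<inter> R = {}"
    using new_point_notin_covering_set_old_point[OF assms(1)] assms(3,4) a by blast
  moreover have "covering_set X a \<subseteq> A \<union> R"
    using covering_set_subset[OF assms(2)] a by blast
  ultimately show "covering_set X a \<subseteq> A"
    by blast
qed

lemma new_part_eq:
  assumes "\<forall>a\<in>A. old_point X n k a" "\<forall>r\<in>R. new_point X n k r"
  shows "R = {x \<in> A \<union> R. new_point X n k x}"
  using assms old_point_not_new_point[of X n k] by auto

lemma covering_set_new_point_eq:
  assumes "finite (topspace X)" "new_point X n k r"
    and "m_system X n k P" "covering_set X r \<subseteq> P"
  shows "covering_set X r - {n} = P - {n}"
proof (rule card_subset_eq)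
  have "P \<subseteq> topspace X"
    using assms(3) openin_subset unfolding m_system_def by blast
  then show "finite (P - {n})"
    using assms(1) finite_subset by blast
  show "covering_set X r - {n} \<subseteq> P - {n}"
    using assms(4) by blast
  show "card (covering_set X r - {n}) = card (P - {n})"
    using assms(2,3) unfolding new_point_def m_system_def by simp
qed

lemma openin_old_part_with_point:
  assumes "finite (topspace X)" "n \<in> topspace X" "n \<notin> A \<union> R" "n \<notin> B \<union> S"
    and "\<forall>a\<in>A. old_point X n k a" "\<forall>r\<in>R. new_point X n k r"
    and "\<forall>b\<in>B. old_point X n k b" "\<forall>s\<in>S. new_point X n k s"
    and "R \<noteq> S"
    and "openin X (A \<union> R)"
    and "m_system X n k (A \<union> R \<union> {n})" "m_system X n k (B \<union> S \<union> {n})"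
  shows "openin X (A \<union> {n})"
proof -
  let ?N = "covering_set X n"
  have open_N: "openin X ?N"
    using openin_covering_set[OF assms(1,2)] .
  have "openin X (A \<union> R \<union> {n})" "openin X (B \<union> S \<union> {n})"
    using assms(11,12) by (simp_all add: m_system_def)
  then have N_sub: "?N \<subseteq> A \<union> R \<union> {n}" "?N \<subseteq> B \<union> S \<union> {n}"
    by (simp_all add: covering_set_subset)
  have "?N \<inter> R = {}"
  proof (rule ccontr)
    assume "?N \<inter> R \<noteq> {}"
    then obtain r where r: "r \<in> ?N" "r \<in> R"
      by blast
    have r_new: "new_point X n k r"
      using assms(6) r(2) by blast
    have "covering_set X r \<subseteq> ?N"
      using covering_set_subset[OF open_N r(1)] .
    then have "covering_set X r \<subseteq> A \<union> R \<union> {n}" "covering_set X r \<subseteq> B \<union> S \<union> {n}"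
      using N_sub by blast+
    then have "A \<union> R \<union> {n} - {n} = B \<union> S \<union> {n} - {n}"
      using covering_set_new_point_eq[OF assms(1) r_new assms(11)]
        covering_set_new_point_eq[OF assms(1) r_new assms(12)] by simp
    then have "A \<union> R = B \<union> S"
      using assms(3,4) by auto
    then have "R = S"
      using new_part_eq[OF assms(5,6)] new_part_eq[OF assms(7,8)] by simp
    with assms(9) show False ..
  qed
  then have "A \<union> {n} = A \<union> ?N"
    using N_sub(1) in_covering_set[OF assms(2)] by blast
  moreover have "openin X A"
    using openin_old_part[OF assms(1,10,5,6)] .
  ultimately show ?thesis
    using open_N by (simp add: openin_Un)
qed

theorem lemma4:
  fixes X :: "nat topology" and n k :: nat and A R B S :: "nat set"
  assumes "n \<ge> 2" and "topspace X = {1..n}" and "k \<ge> 1"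
    and "A \<subseteq> {1..n} - {n}" "R \<subseteq> {1..n} - {n}" "B \<subseteq> {1..n} - {n}" "S \<subseteq> {1..n} - {n}"
    and "A \<inter> R = {}" "B \<inter> S = {}"
    and "\<forall>a\<in>A. old_point X n k a" "\<forall>b\<in>B. old_point X n k b"
    and "\<forall>r\<in>R. new_point X n k r" "\<forall>s\<in>S. new_point X n k s"
    and "R \<noteq> S"
    and "new_k_system X n k (A \<union> R)" "new_k_system X n k (A \<union> R \<union> {n})"
    and "new_k_system X n k (B \<union> S)" "new_k_system X n k (B \<union> S \<union> {n})"
  shows "openin X A \<and> openin X (A \<union> {n}) \<and> openin X B \<and> openin X (B \<union> {n})"
proof -
  have fin: "finite (topspace X)" and n: "n \<in> topspace X"
    using assms(1,2) by auto
  have n_notin: "n \<notin> A \<union> R" "n \<notin> B \<union> S"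
    using assms(4-7) by auto
  have open_AR: "openin X (A \<union> R)" and open_BS: "openin X (B \<union> S)"
    using assms(15,17) by (auto simp: new_k_system_def m_system_def)
  have systems: "m_system X n k (A \<union> R \<union> {n})" "m_system X n k (B \<union> S \<union> {n})"
    using assms(16,18) by (auto simp: new_k_system_def)
  show ?thesis
    using openin_old_part[OF fin open_AR assms(10,12)] openin_old_part[OF fin open_BS assms(11,13)]
      openin_old_part_with_point[OF fin n n_notin assms(10,12,11,13,14) open_AR systems]
      openin_old_part_with_point[OF fin n n_notin(2,1) assms(11,13,10,12) assms(14)[symmetric]
        open_BS systems(2,1)]
    by blast
qed

end
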